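(* For every prime power $q$ and every integer $h\geq 2$, there exists a $3$-fold blocking set of size $3(q^h+q^{h-1}+1)$ in $\mathrm{PG}(2,q^h)$.
   Context: A $3$-fold blocking set is a point set meeting every line in at least $3$ points. *)

theory Defs
  imports Main "HOL-Computational_Algebra.Primes"
begin

text \<open>The projective plane PG(2,F) over a field F: points are the 1-dimensional
subspaces of F^3 (represented as the set of nonzero multiples of a nonzero vector),
lines are the projective points annihilated by a nonzero linear form.\<close>

type_synonym 'a vec3 = "'a \<times> 'a \<times> 'a"

definition scale3 :: "'a::field \<Rightarrow> 'a vec3 \<Rightarrow> 'a vec3" where
  "scale3 c v = (c * fst v, c * fst (snd v), c * snd (snd v))"

definition dot3 :: "'a::field vec3 \<Rightarrow> 'a vec3 \<Rightarrow> 'a" where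
  "dot3 a v = fst a * fst v + fst (snd a) * fst (snd v) + snd (snd a) * snd (snd v)"

definition proj_point :: "'a::field vec3 \<Rightarrow> 'a vec3 set" where
  "proj_point v = {scale3 c v | c. c \<noteq> 0}"

definition pg_points :: "'a::field vec3 set set" where
  "pg_points = proj_point ` (UNIV - {(0,0,0)})"

definition pg_line :: "'a::field vec3 \<Rightarrow> 'a vec3 set set" where
  "pg_line a = {p \<in> pg_points. \<forall>v\<in>p. dot3 a v = 0}"

definition pg_lines :: "'a::field vec3 set set set" where
  "pg_lines = pg_line ` (UNIV - {(0,0,0)})"

definition multiple_blocking_set :: "nat \<Rightarrow> 'a::field vec3 set set \<Rightarrow> bool" where
  "multiple_blocking_set t B \<longleftrightarrow> B \<subseteq> pg_points \<and> (\<forall>L\<in>pg_lines. card (B \<inter> L) \<ge> t)"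

end

(* Let T be the trace map of GF(q^h) onto GF(q) and c an element outside GF(q).  The graph
   of x |-> T x - c, together with the points at infinity of the directions it determines, is a
   Redei-type blocking set R; since T is GF(q)-linear these directions are the values T z / z,
   so R has at most q^h + q^(h-1) + 1 points.  The linear map (x, y, z) |-> (alpha z, beta x, y)
   has cube alpha beta I and so induces a collineation G of order 3.  For suitable c, alpha and
   beta the sets R and G R are disjoint; then R, G R and G^2 R are pairwise disjoint blocking
   sets, whose union meets every line in at least 3 points.  Adding further points brings its
   size to exactly 3 (q^h + q^(h-1) + 1), which is at most the number q^2h + q^h + 1 of points
   of the plane. *)

theory Submission
  imports Defs "HOL-Computational_Algebra.Polynomial" "HOL-Number_Theory.Residues"
    "HOL-Library.Disjoint_Sets"
begin

section \<open>Points and lines of the projective plane\<close>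

lemma scale3_1 [simp]: "scale3 1 v = v"
  by (cases v) (simp add: scale3_def)

lemma scale3_scale3: "scale3 a (scale3 b v) = scale3 (a * b) v"
  by (cases v) (simp add: scale3_def mult.assoc)

lemma dot3_scale3: "dot3 n (scale3 c v) = c * dot3 n v"
  by (cases v, cases n) (simp add: scale3_def dot3_def algebra_simps)

lemma proj_point_self: "v \<in> proj_point v"
  unfolding proj_point_def by (auto intro: exI[of _ 1])

lemma proj_point_scale3:
  assumes "c \<noteq> 0"
  shows "proj_point (scale3 c v) = proj_point v"
  unfolding proj_point_def scale3_scale3
proof (intro Collect_cong iffI; elim exE conjE)
  fix w d assume "w = scale3 (d * c) v" "d \<noteq> 0"
  then show "\<exists>e. w = scale3 e v \<and> e \<noteq> 0"
    using assms by auto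
next
  fix w d assume "w = scale3 d v" "d \<noteq> 0"
  then show "\<exists>e. w = scale3 (e * c) v \<and> e \<noteq> 0"
    using assms by (intro exI[of _ "d / c"]) simp
qed

lemma proj_point_eq_iff: "proj_point u = proj_point v \<longleftrightarrow> (\<exists>c. c \<noteq> 0 \<and> v = scale3 c u)"
proof
  assume "proj_point u = proj_point v"
  then have "v \<in> proj_point u"
    using proj_point_self by metis
  then show "\<exists>c. c \<noteq> 0 \<and> v = scale3 c u"
    unfolding proj_point_def by auto
qed (auto simp: proj_point_scale3)

lemma proj_point_in_pg_points: "v \<noteq> (0, 0, 0) \<Longrightarrow> proj_point v \<in> pg_points"
  unfolding pg_points_def by auto

lemma pg_pointsE:
  assumes "P \<in> pg_points"
  obtains v where "v \<noteq> (0, 0, 0)" "P = proj_point v"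
  using assms unfolding pg_points_def by auto

lemma pg_linesE:
  assumes "L \<in> pg_lines"
  obtains a b c where "(a, b, c) \<noteq> (0, 0, 0)" "L = pg_line (a, b, c)"
  using assms unfolding pg_lines_def by auto

lemma proj_point_in_pg_line_iff:
  assumes "v \<noteq> (0, 0, 0)"
  shows "proj_point v \<in> pg_line n \<longleftrightarrow> dot3 n v = 0"
proof
  assume "proj_point v \<in> pg_line n"
  then show "dot3 n v = 0"
    unfolding pg_line_def using proj_point_self by blast
next
  assume "dot3 n v = 0"
  then have "\<forall>w\<in>proj_point v. dot3 n w = 0"
    unfolding proj_point_def by (auto simp: dot3_scale3)
  then show "proj_point v \<in> pg_line n"
    unfolding pg_line_def using proj_point_in_pg_points[OF assms] by auto
qed

lemma card_pg_points_ge: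
  "card (UNIV :: 'a set) ^ 2 + card (UNIV :: 'a set) + 1
     \<le> card (pg_points :: 'a::{finite,field} vec3 set set)"
proof -
  define N :: "'a vec3 set" where
    "N = range (\<lambda>(a, b). (1, a, b)) \<union> range (\<lambda>a. (0, 1, a)) \<union> {(0, 0, 1)}"
  have "card (range (\<lambda>(a::'a, b::'a). (1::'a, a, b))) = card (UNIV :: 'a set) ^ 2"
    by (subst card_image) (auto simp: inj_on_def card_cartesian_product power2_eq_square
        simp flip: UNIV_Times_UNIV)
  moreover have "card (range (\<lambda>a::'a. (0::'a, 1::'a, a))) = card (UNIV :: 'a set)"
    by (subst card_image) (auto simp: inj_on_def)
  ultimately have "card N = card (UNIV :: 'a set) ^ 2 + card (UNIV :: 'a set) + 1"
    unfolding N_def by (subst card_Un_disjoint; auto)+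
  moreover have "inj_on proj_point N"
    unfolding N_def by (auto simp: inj_on_def proj_point_eq_iff scale3_def)
  moreover have "proj_point ` N \<subseteq> pg_points"
    unfolding N_def by (auto intro!: proj_point_in_pg_points)
  ultimately show ?thesis
    by (metis card_image card_mono finite)
qed

section \<open>Blocking sets\<close>

definition blocking_set :: "'a::field vec3 set set \<Rightarrow> bool" where
  "blocking_set S \<longleftrightarrow> S \<subseteq> pg_points \<and> (\<forall>L\<in>pg_lines. S \<inter> L \<noteq> {})"

lemma multiple_blocking_set_UN_disjoint:
  fixes S :: "'i \<Rightarrow> 'a::{finite,field} vec3 set set"
  assumes "finite I" "disjoint_family_on S I" "\<And>i. i \<in> I \<Longrightarrow> blocking_set (S i)"
  shows "multiple_blocking_set (card I) (\<Union>i\<in>I. S i)"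
  unfolding multiple_blocking_set_def
proof safe
  show "P \<in> pg_points" if "P \<in> S i" "i \<in> I" for P i
    using assms(3) that unfolding blocking_set_def by blast
next
  fix L :: "'a vec3 set set" assume "L \<in> pg_lines"
  then have "\<forall>i\<in>I. \<exists>P. P \<in> S i \<inter> L"
    using assms(3) unfolding blocking_set_def by blast
  then obtain pick where pick: "\<forall>i\<in>I. pick i \<in> S i \<inter> L"
    by (rule bchoice[elim_format]) blast
  have "inj_on pick I"
  proof (rule inj_onI, rule ccontr)
    fix i j assume "i \<in> I" "j \<in> I" "pick i = pick j" "i \<noteq> j"
    then have "pick i \<in> S i \<inter> S j"
      using pick by auto
    then show False
      using disjoint_family_onD[OF assms(2) \<open>i \<in> I\<close> \<open>j \<in> I\<close> \<open>i \<noteq> j\<close>] by blast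
  qed
  then have "card I = card (pick ` I)"
    by (simp add: card_image)
  also have "\<dots> \<le> card ((\<Union>i\<in>I. S i) \<inter> L)"
    using pick by (intro card_mono[OF finite]) blast
  finally show "card I \<le> card ((\<Union>i\<in>I. S i) \<inter> L)" .
qed

lemma multiple_blocking_set_of_card:
  fixes B :: "'a::{finite,field} vec3 set set"
  assumes "multiple_blocking_set t B" "card B \<le> n" "n \<le> card (pg_points :: 'a vec3 set set)"
  shows "\<exists>B' :: 'a vec3 set set. multiple_blocking_set t B' \<and> card B' = n"
proof -
  have B: "B \<subseteq> pg_points"
    using assms(1) unfolding multiple_blocking_set_def by blast
  then have "n - card B \<le> card (pg_points - B)"
    using assms(2,3) by (simp add: card_Diff_subset)
  then obtain W where W: "W \<subseteq> pg_points - B" "card W = n - card B"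
    by (rule obtain_subset_with_card_n)
  have "card (B \<union> W) = n"
    using W assms(2) by (subst card_Un_disjoint[OF finite finite]) auto
  moreover have "t \<le> card ((B \<union> W) \<inter> L)" if "L \<in> pg_lines" for L
  proof -
    have "t \<le> card (B \<inter> L)"
      using assms(1) that unfolding multiple_blocking_set_def by blast
    also have "\<dots> \<le> card ((B \<union> W) \<inter> L)"
      by (rule card_mono[OF finite]) blast
    finally show ?thesis .
  qed
  then have "multiple_blocking_set t (B \<union> W)"
    using B W unfolding multiple_blocking_set_def by blast
  ultimately show ?thesis
    by blast
qed

section \<open>Redei sets\<close>

definition directions :: "('a::field \<Rightarrow> 'a) \<Rightarrow> 'a set" where
  "directions f = {(f x - f y) / (x - y) | x y. x \<noteq> y}"

definition redei_set :: "('a::field \<Rightarrow> 'a) \<Rightarrow> 'a vec3 set set" where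
  "redei_set f = range (\<lambda>x. proj_point (x, f x, 1)) \<union> (\<lambda>d. proj_point (1, d, 0)) ` directions f"

lemma surj_minus_non_direction:
  fixes f :: "'a::{finite,field} \<Rightarrow> 'a"
  assumes "m \<notin> directions f"
  shows "surj (\<lambda>x. f x - m * x)"
proof (rule finite_UNIV_inj_surj[OF finite_UNIV], rule injI)
  fix x y assume "f x - m * x = f y - m * y"
  then have "f x - f y = m * (x - y)"
    by (simp add: algebra_simps)
  then show "x = y"
    using assms unfolding directions_def by force
qed

lemma blocking_set_redei_set:
  fixes f :: "'a::{finite,field} \<Rightarrow> 'a"
  shows "blocking_set (redei_set f)"
  unfolding blocking_set_def
proof safe
  show "P \<in> pg_points" if "P \<in> redei_set f" for P
    using that unfolding redei_set_def by (auto intro!: proj_point_in_pg_points)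
next
  fix L assume "L \<in> pg_lines" and miss: "redei_set f \<inter> L = {}"
  from \<open>L \<in> pg_lines\<close> obtain a b c where L: "L = pg_line (a, b, c)"
    by (rule pg_linesE)
  have "proj_point (x, f x, 1) \<notin> L" for x
    using miss unfolding redei_set_def by blast
  then have affine: "a * x + b * f x + c \<noteq> 0" for x
    using proj_point_in_pg_line_iff[of "(x, f x, 1)" "(a, b, c)"] by (simp add: L dot3_def)
  have "proj_point (1, d, 0) \<notin> L" if "d \<in> directions f" for d
    using miss that unfolding redei_set_def by blast
  then have ideal: "a + b * d \<noteq> 0" if "d \<in> directions f" for d
    using that proj_point_in_pg_line_iff[of "(1, d, 0)" "(a, b, c)"] by (simp add: L dot3_def)
  show False
  proof (cases "b = 0")
    case True
    have "(f 1 - f 0) / (1 - 0) \<in> directions f"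
      unfolding directions_def by (intro CollectI exI[of _ 1] exI[of _ 0]) simp
    then have "a \<noteq> 0"
      using ideal True by force
    then show False
      using affine[of "- c / a"] True by simp
  next
    case False
    then have "- a / b \<notin> directions f"
      using ideal[of "- a / b"] by auto
    then obtain x where x: "- c / b = f x - (- a / b) * x"
      by (rule surj_minus_non_direction[THEN surjE])
    have "a * x + b * f x + c = b * (f x - (- a / b) * x) + c"
      using False by (simp add: field_simps)
    also have "\<dots> = 0"
      unfolding x[symmetric] using False by simp
    finally have "a * x + b * f x + c = 0" .
    then show False
      using affine by blast
  qed
qed

lemma card_redei_set_le:
  fixes f :: "'a::{finite,field} \<Rightarrow> 'a"
  shows "card (redei_set f) \<le> card (UNIV :: 'a set) + card (directions f)"
  unfolding redei_set_def
  by (rule order_trans[OF card_Un_le add_mono]) (simp_all add: card_image_le)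

section \<open>A collineation of order three\<close>

definition cyc :: "'a::field \<Rightarrow> 'a \<Rightarrow> 'a vec3 \<Rightarrow> 'a vec3" where
  "cyc \<alpha> \<beta> v = (\<alpha> * snd (snd v), \<beta> * fst v, fst (snd v))"

lemma cyc_scale3: "cyc \<alpha> \<beta> (scale3 c v) = scale3 c (cyc \<alpha> \<beta> v)"
  by (cases v) (simp add: cyc_def scale3_def algebra_simps)

lemma cyc_eq_0_iff: "\<alpha> \<noteq> 0 \<Longrightarrow> \<beta> \<noteq> 0 \<Longrightarrow> cyc \<alpha> \<beta> v = (0, 0, 0) \<longleftrightarrow> v = (0, 0, 0)"
  by (cases v) (auto simp: cyc_def)

lemma inj_cyc: "\<alpha> \<noteq> 0 \<Longrightarrow> \<beta> \<noteq> 0 \<Longrightarrow> inj (cyc \<alpha> \<beta>)"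
  by (rule injI) (auto simp: cyc_def prod_eq_iff)

lemma cyc_cyc_cyc: "cyc \<alpha> \<beta> (cyc \<alpha> \<beta> (cyc \<alpha> \<beta> v)) = scale3 (\<alpha> * \<beta>) v"
  by (cases v) (simp add: cyc_def scale3_def algebra_simps)

lemma image_cyc_proj_point: "cyc \<alpha> \<beta> ` proj_point v = proj_point (cyc \<alpha> \<beta> v)"
  unfolding proj_point_def by (auto simp flip: cyc_scale3)

lemma dot3_cyc: "dot3 n (cyc \<alpha> \<beta> v) = dot3 (\<beta> * fst (snd n), snd (snd n), \<alpha> * fst n) v"
  by (cases v, cases n) (simp add: cyc_def dot3_def algebra_simps)

lemma image_cyc_in_pg_points:
  assumes "\<alpha> \<noteq> 0" "\<beta> \<noteq> 0" "P \<in> pg_points"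
  shows "cyc \<alpha> \<beta> ` P \<in> pg_points"
  using assms(3) by (rule pg_pointsE)
    (simp add: image_cyc_proj_point proj_point_in_pg_points cyc_eq_0_iff assms(1,2))

lemma image_cyc_cube:
  assumes "\<alpha> \<noteq> 0" "\<beta> \<noteq> 0" "P \<in> pg_points"
  shows "cyc \<alpha> \<beta> ` cyc \<alpha> \<beta> ` cyc \<alpha> \<beta> ` P = P"
  using assms(3) by (rule pg_pointsE)
    (simp add: image_cyc_proj_point cyc_cyc_cyc proj_point_scale3 assms(1,2))

lemma blocking_set_image_cyc:
  assumes "blocking_set S" "\<alpha> \<noteq> 0" "\<beta> \<noteq> 0"
  shows "blocking_set (image (cyc \<alpha> \<beta>) ` S)"
  unfolding blocking_set_def
proof safe
  show "cyc \<alpha> \<beta> ` P \<in> pg_points" if "P \<in> S" for P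
    using assms that unfolding blocking_set_def by (blast intro: image_cyc_in_pg_points)
next
  fix L assume "L \<in> pg_lines" and miss: "image (cyc \<alpha> \<beta>) ` S \<inter> L = {}"
  from \<open>L \<in> pg_lines\<close> obtain a b c where abc: "(a, b, c) \<noteq> (0, 0, 0)" "L = pg_line (a, b, c)"
    by (rule pg_linesE)
  define n where "n = (\<beta> * b, c, \<alpha> * a)"
  have "n \<noteq> (0, 0, 0)"
    using abc(1) assms(2,3) by (auto simp: n_def)
  then have "pg_line n \<in> pg_lines"
    unfolding pg_lines_def by blast
  then obtain P where P: "P \<in> S" "P \<in> pg_line n"
    using assms(1) unfolding blocking_set_def by blast
  then obtain v where v: "v \<noteq> (0, 0, 0)" "P = proj_point v"
    using assms(1) unfolding blocking_set_def by (blast elim: pg_pointsE)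
  have "dot3 n v = 0"
    using P(2) v proj_point_in_pg_line_iff by blast
  then have "cyc \<alpha> \<beta> ` P \<in> L"
    using v abc(2) assms(2,3)
    by (simp add: image_cyc_proj_point proj_point_in_pg_line_iff cyc_eq_0_iff dot3_cyc n_def)
  then show False
    using miss P(1) by blast
qed

lemma disjoint_family_on_orbit3:
  assumes "inj g" "\<And>x. x \<in> A \<Longrightarrow> g (g (g x)) = x" "A \<inter> g ` A = {}"
  shows "disjoint_family_on (\<lambda>i. (image g ^^ i) A) {..<3}"
proof -
  have "g ` A \<inter> g ` g ` A = {}"
    using assms(1,3) by (simp flip: image_Int)
  moreover have "A \<inter> g ` g ` A = {}"
  proof (rule ccontr)
    assume "A \<inter> g ` g ` A \<noteq> {}"
    then obtain x where "x \<in> A" "g (g x) \<in> A"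
      by blast
    then have "x \<in> A \<inter> g ` A"
      using assms(2) by (metis IntI image_eqI)
    then show False
      using assms(3) by blast
  qed
  moreover have "{..<3::nat} = {0, 1, 2}"
    by auto
  ultimately show ?thesis
    using assms(3) unfolding disjoint_family_on_def
    by (auto simp: numeral_2_eq_2 Int_commute)
qed

lemma card_funpow_image_le:
  fixes f :: "'a::finite \<Rightarrow> 'a"
  shows "card ((image f ^^ i) A) \<le> card A"
proof (induction i)
  case (Suc i)
  have "card ((image f ^^ Suc i) A) \<le> card ((image f ^^ i) A)"
    by (simp add: card_image_le)
  then show ?case
    using Suc.IH by linarith
qed simp

lemma multiple_blocking_set_cyc_orbit:
  fixes R :: "'a::{finite,field} vec3 set set"
  assumes "blocking_set R" "\<alpha> \<noteq> 0" "\<beta> \<noteq> 0" "R \<inter> image (cyc \<alpha> \<beta>) ` R = {}"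
  shows "multiple_blocking_set 3 (\<Union>i<3. (image (image (cyc \<alpha> \<beta>)) ^^ i) R)"
proof -
  have blocks: "blocking_set ((image (image (cyc \<alpha> \<beta>)) ^^ i) R)" for i
    by (induction i) (simp_all add: assms(1-3) blocking_set_image_cyc)
  have "inj (image (cyc \<alpha> \<beta>))"
    using inj_cyc[OF assms(2,3)] by (simp add: inj_on_def inj_image_eq_iff)
  moreover have "cyc \<alpha> \<beta> ` cyc \<alpha> \<beta> ` cyc \<alpha> \<beta> ` P = P" if "P \<in> R" for P
    using assms(1) that unfolding blocking_set_def by (intro image_cyc_cube[OF assms(2,3)]) blast
  ultimately have "disjoint_family_on (\<lambda>i. (image (image (cyc \<alpha> \<beta>)) ^^ i) R) {..<3}"
    using assms(4) by (intro disjoint_family_on_orbit3)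
  then have "multiple_blocking_set (card {..<3::nat}) (\<Union>i<3. (image (image (cyc \<alpha> \<beta>)) ^^ i) R)"
    using blocks by (intro multiple_blocking_set_UN_disjoint) auto
  then show ?thesis
    by simp
qed

section \<open>Finite fields\<close>

lemma power_card_eq_self:
  fixes x :: "'a::{finite,field}"
  shows "x ^ card (UNIV :: 'a set) = x"
proof (cases "x = 0")
  case False
  define G :: "'a monoid" where "G = \<lparr>carrier = UNIV - {0}, monoid.mult = (*), one = 1\<rparr>"
  interpret group G
    by (rule groupI) (auto simp: G_def mult.assoc intro!: bexI[of _ "inverse _"])
  have pow: "x [^]\<^bsub>G\<^esub> n = x ^ n" for n :: nat
    by (induction n) (simp_all add: G_def)
  have "order G = card (UNIV :: 'a set) - 1"
    by (simp add: order_def G_def card_Diff_singleton)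
  then have "x ^ (card (UNIV :: 'a set) - 1) = x [^]\<^bsub>G\<^esub> order G"
    by (simp add: pow)
  also have "\<dots> = 1"
    using pow_order_eq_1[of x] False by (simp add: G_def)
  finally have "x ^ (card (UNIV :: 'a set) - 1) = 1" .
  moreover have "card (UNIV :: 'a set) > 0"
    by (simp add: finite_UNIV_card_ge_0)
  ultimately show ?thesis
    by (simp add: power_eq_if)
qed (simp add: finite_UNIV_card_ge_0)

lemma CHAR_eq_if_card_eq_prime_power:
  assumes "prime p" "card (UNIV :: 'a::{finite,field} set) = p ^ n"
  shows "CHAR('a) = p"
proof -
  have "prime CHAR('a)"
    by (intro prime_CHAR_semidom finite_imp_CHAR_pos) simp
  moreover have "CHAR('a) dvd p ^ n"
    using CHAR_dvd_CARD[where 'a = 'a] assms(2) by simp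
  ultimately show ?thesis
    using assms(1) by (metis prime_dvd_power primes_dvd_imp_eq)
qed

lemma card_power_eq_poly_le:
  fixes p :: "'a::idom poly"
  assumes "degree p < n"
  shows "card {x. x ^ n = poly p x} \<le> n"
proof -
  define P where "P = Polynomial.monom 1 n - p"
  have "P \<noteq> 0"
  proof
    assume "P = 0"
    then have "p = Polynomial.monom 1 n"
      by (simp add: P_def)
    then have "degree p = n"
      by (simp add: degree_monom_eq)
    then show False
      using assms by simp
  qed
  have "degree P \<le> n"
    unfolding P_def using assms by (intro degree_diff_le) (simp_all add: degree_monom_le)
  have "{x. x ^ n = poly p x} = {x. poly P x = 0}"
    by (simp add: P_def poly_monom)
  then show ?thesis
    using card_poly_roots_bound[OF \<open>P \<noteq> 0\<close>] \<open>degree P \<le> n\<close> by simp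
qed

section \<open>The trace of \<open>GF(q^h)\<close> over \<open>GF(q)\<close>\<close>

text \<open>\<open>power_q_add\<close> says that \<open>x \<mapsto> x ^ q\<close> is a field automorphism; its fixed field
  \<open>base_field\<close> is \<open>GF(q)\<close> and \<open>tr\<close> is the trace onto it.\<close>

locale relative_trace =
  fixes q h :: nat and tr :: "'a::{finite,field} \<Rightarrow> 'a"
  assumes q_ge_2: "q \<ge> 2" and h_ge_2: "h \<ge> 2"
    and card_UNIV: "card (UNIV :: 'a set) = q ^ h"
    and power_q_add: "\<And>x y :: 'a. (x + y) ^ q = x ^ q + y ^ q"
    and tr_eq: "\<And>x. tr x = (\<Sum>i<h. x ^ q ^ i)"
begin

definition base_field :: "'a set" where
  "base_field = {x. x ^ q = x}"

lemma power_q_Suc: "(x :: 'a) ^ q ^ Suc i = (x ^ q ^ i) ^ q"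
  by (metis power_Suc2 power_mult)

lemma power_q_sum: "(\<Sum>i\<in>A. f i :: 'a) ^ q = (\<Sum>i\<in>A. f i ^ q)"
  using q_ge_2 by (induction A rule: infinite_finite_induct) (simp_all add: power_q_add power_0_left)

lemma power_q_power_add: "(x + y :: 'a) ^ q ^ i = x ^ q ^ i + y ^ q ^ i"
proof (induction i)
  case (Suc i)
  show ?case
    by (simp only: power_q_Suc Suc.IH power_q_add)
qed simp

lemma tr_add: "tr (x + y) = tr x + tr y"
  by (simp add: tr_eq power_q_power_add sum.distrib)

lemma tr_0: "tr 0 = 0"
  using q_ge_2 by (simp add: tr_eq power_0_left)

lemma tr_diff: "tr (x - y) = tr x - tr y"
  using tr_add[of "x - y" y] by simp

lemma tr_minus: "tr (- x) = - tr x"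
  using tr_diff[of 0 x] by (simp add: tr_0)

lemma power_q_power_base_field: "a \<in> base_field \<Longrightarrow> a ^ q ^ i = a"
proof (induction i)
  case (Suc i)
  then show ?case
    by (simp only: power_q_Suc) (simp add: base_field_def)
qed simp

lemma base_field_add: "a \<in> base_field \<Longrightarrow> b \<in> base_field \<Longrightarrow> a + b \<in> base_field"
  by (simp add: base_field_def power_q_add)

lemma base_field_mult: "a \<in> base_field \<Longrightarrow> b \<in> base_field \<Longrightarrow> a * b \<in> base_field"
  by (simp add: base_field_def power_mult_distrib)

lemma base_field_inverse: "a \<in> base_field \<Longrightarrow> inverse a \<in> base_field"
  by (simp add: base_field_def power_inverse)

lemma zero_in_base_field: "0 \<in> base_field"
  using q_ge_2 by (simp add: base_field_def)

lemma tr_in_base_field: "tr x \<in> base_field"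
proof -
  have "x ^ q ^ h = x"
    using power_card_eq_self[of x] by (simp add: card_UNIV)
  then have "(\<Sum>i<h. x ^ q ^ Suc i) = (\<Sum>i<h. x ^ q ^ i)"
    using sum.lessThan_Suc_shift[of "\<lambda>i. x ^ q ^ i" h] by simp
  then show ?thesis
    by (simp add: base_field_def tr_eq power_q_sum flip: power_q_Suc)
qed

lemma tr_base_field_mult: "a \<in> base_field \<Longrightarrow> tr (a * x) = a * tr x"
  by (simp add: tr_eq power_mult_distrib power_q_power_base_field sum_distrib_left)

lemma card_base_field_le: "card base_field \<le> q"
proof -
  have "base_field = {x. x ^ q = poly [:0, 1:] x}"
    by (simp add: base_field_def)
  then show ?thesis
    using card_power_eq_poly_le[of "[:0, 1:]" q] q_ge_2 by simp
qed

lemma power_q_h: "q ^ h = q * q ^ (h - 1)"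
  using h_ge_2 by (cases h) simp_all

lemma two_le_power_q_h_minus_1: "2 \<le> q ^ (h - 1)"
proof -
  have "q ^ 1 \<le> q ^ (h - 1)"
    using q_ge_2 h_ge_2 by (intro power_increasing) simp_all
  then show ?thesis
    using q_ge_2 by simp
qed

lemma card_tr_fibre_le: "card {x. tr x = a} \<le> q ^ (h - 1)"
proof -
  define p where "p = [:a:] - (\<Sum>i<h - 1. Polynomial.monom 1 (q ^ i))"
  have "degree (Polynomial.monom (1::'a) (q ^ i)) \<le> q ^ (h - 2)" if "i < h - 1" for i
    using that q_ge_2 by (simp add: degree_monom_eq power_increasing)
  then have "degree p \<le> q ^ (h - 2)"
    unfolding p_def by (intro degree_diff_le degree_sum_le) simp_all
  also have "q ^ (h - 2) < q ^ (h - 1)"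
    using q_ge_2 h_ge_2 by (intro power_strict_increasing) simp_all
  finally have "card {x. x ^ q ^ (h - 1) = poly p x} \<le> q ^ (h - 1)"
    by (rule card_power_eq_poly_le)
  moreover have "tr x = (\<Sum>i<h - 1. x ^ q ^ i) + x ^ q ^ (h - 1)" for x
    using h_ge_2 sum.lessThan_Suc[of "\<lambda>i. x ^ q ^ i" "h - 1"] by (simp add: tr_eq)
  then have "{x. tr x = a} = {x. x ^ q ^ (h - 1) = poly p x}"
    by (auto simp: p_def poly_sum poly_monom)
  ultimately show ?thesis
    by simp
qed

lemma directions_tr_minus: "directions (\<lambda>x. tr x - c) = {tr z / z | z. z \<noteq> 0}"
proof -
  have "(tr x - c - (tr y - c)) / (x - y) = tr (x - y) / (x - y)" for x y
    by (simp add: tr_diff)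
  moreover have "tr z / z = (tr z - c - (tr 0 - c)) / (z - 0)" for z
    by (simp add: tr_0)
  ultimately show ?thesis
    unfolding directions_def by (metis (no_types, opaque_lifting) eq_iff_diff_eq_0)
qed

lemma card_directions_tr_le: "card (directions (\<lambda>x. tr x - c)) \<le> q ^ (h - 1) + 1"
proof -
  have "directions (\<lambda>x. tr x - c) \<subseteq> insert 0 (inverse ` {y. tr y = 1})"
  proof
    fix d assume "d \<in> directions (\<lambda>x. tr x - c)"
    then obtain z where z: "z \<noteq> 0" "d = tr z / z"
      by (auto simp: directions_tr_minus)
    show "d \<in> insert 0 (inverse ` {y. tr y = 1})"
    proof (cases "tr z = 0")
      case False
      have "tr (inverse (tr z) * z) = inverse (tr z) * tr z"
        by (intro tr_base_field_mult base_field_inverse tr_in_base_field)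
      then have "tr (z / tr z) = 1"
        using False by (simp add: field_simps)
      moreover have "d = inverse (z / tr z)"
        using z by simp
      ultimately show ?thesis
        by blast
    qed (simp add: z)
  qed
  then have "card (directions (\<lambda>x. tr x - c)) \<le> card (insert 0 (inverse ` {y. tr y = 1}))"
    by (rule card_mono[OF finite])
  also have "\<dots> \<le> card (inverse ` {y. tr y = 1}) + 1"
    by (simp add: card_insert_if)
  also have "\<dots> \<le> card {y. tr y = 1} + 1"
    by (simp add: card_image_le)
  also have "\<dots> \<le> q ^ (h - 1) + 1"
    using card_tr_fibre_le by simp
  finally show ?thesis .
qed

lemma exists_nonzero_tr_eq_0: "\<exists>y. y \<noteq> 0 \<and> tr y = 0"
proof -
  have "q ^ 1 < q ^ h"
    using q_ge_2 h_ge_2 by (intro power_strict_increasing) simp_all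
  then have "card (range tr) < card (UNIV :: 'a set)"
    using card_mono[OF finite, of "range tr" base_field] tr_in_base_field card_base_field_le
      card_UNIV
    by fastforce
  then have "\<not> inj tr"
    using card_image by fastforce
  then obtain x y where "x \<noteq> y" "tr x = tr y"
    unfolding inj_def by blast
  then show ?thesis
    by (intro exI[of _ "x - y"]) (simp add: tr_diff)
qed

lemma exists_tr_ne_0_and_tr_divide_ne_0:
  assumes "a \<noteq> 0"
  shows "\<exists>z. tr z \<noteq> 0 \<and> tr (a / z) \<noteq> 0"
proof -
  define A where "A = {w. tr w = 0}"
  define B where "B = {w. tr (a / w) = 0}"
  have "B \<subseteq> (\<lambda>v. a / v) ` A"
  proof
    fix w assume "w \<in> B"
    then have "a / w \<in> A"
      by (simp add: A_def B_def)
    moreover have "w = a / (a / w)"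
      using assms by (cases "w = 0") simp_all
    ultimately show "w \<in> (\<lambda>v. a / v) ` A"
      by (rule rev_image_eqI)
  qed
  then have "card B \<le> card ((\<lambda>v. a / v) ` A)"
    by (rule card_mono[OF finite])
  also have "\<dots> \<le> card A"
    by (rule card_image_le[OF finite])
  finally have "card B \<le> card A" .
  moreover have "card A \<le> q ^ (h - 1)"
    unfolding A_def by (rule card_tr_fibre_le)
  moreover have "0 \<in> A \<inter> B"  \<comment> \<open>\<open>a / 0 = 0\<close>\<close>
    by (simp add: A_def B_def tr_0)
  then have "card (A \<inter> B) \<noteq> 0"
    using card_0_eq[OF finite, of "A \<inter> B"] by blast
  then have "card (A \<inter> B) \<ge> 1"
    by linarith
  moreover have "card (A \<union> B) + card (A \<inter> B) = card A + card B"
    by (rule card_Un_Int[OF finite finite, symmetric])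
  moreover have "2 * q ^ (h - 1) \<le> q ^ h"
    using q_ge_2 power_q_h by simp
  ultimately have "card (A \<union> B) < card (UNIV :: 'a set)"
    using card_UNIV by linarith
  then obtain z where "z \<notin> A \<union> B"
    by (metis UNIV_eq_I less_irrefl)
  then show ?thesis
    by (auto simp: A_def B_def)
qed

lemma exists_nonzero_tr_divide_avoiding:
  assumes "c \<notin> base_field"
  shows "\<exists>\<alpha>. \<alpha> \<noteq> 0 \<and> (\<forall>k\<in>base_field - {0}. tr (\<alpha> / (k - c)) \<noteq> F k)"
proof -
  define bad where "bad = (\<Union>k\<in>base_field - {0}. {\<alpha>. tr (\<alpha> / (k - c)) = F k})"
  have "card {\<alpha>. tr (\<alpha> / (k - c)) = F k} \<le> q ^ (h - 1)" if "k \<in> base_field" for k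
  proof -
    have "k - c \<noteq> 0"
      using that assms by auto
    have "{\<alpha>. tr (\<alpha> / (k - c)) = F k} \<subseteq> (\<lambda>v. v * (k - c)) ` {v. tr v = F k}"
    proof
      fix \<alpha> assume "\<alpha> \<in> {\<alpha>. tr (\<alpha> / (k - c)) = F k}"
      then have "\<alpha> / (k - c) \<in> {v. tr v = F k}"
        by simp
      moreover have "\<alpha> = \<alpha> / (k - c) * (k - c)"
        using \<open>k - c \<noteq> 0\<close> by simp
      ultimately show "\<alpha> \<in> (\<lambda>v. v * (k - c)) ` {v. tr v = F k}"
        by (rule rev_image_eqI)
    qed
    then have "card {\<alpha>. tr (\<alpha> / (k - c)) = F k} \<le> card ((\<lambda>v. v * (k - c)) ` {v. tr v = F k})"
      by (rule card_mono[OF finite])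
    also have "\<dots> \<le> card {v. tr v = F k}"
      by (rule card_image_le[OF finite])
    also have "\<dots> \<le> q ^ (h - 1)"
      by (rule card_tr_fibre_le)
    finally show ?thesis .
  qed
  then have "card bad \<le> (\<Sum>k\<in>base_field - {0}. q ^ (h - 1))"
    unfolding bad_def by (intro order_trans[OF card_UN_le sum_mono]) simp_all
  also have "\<dots> = (card base_field - 1) * q ^ (h - 1)"
    by (simp add: card_Diff_singleton zero_in_base_field)
  also have "\<dots> \<le> (q - 1) * q ^ (h - 1)"
    by (intro mult_le_mono1 diff_le_mono card_base_field_le)
  finally have "card (insert 0 bad) \<le> (q - 1) * q ^ (h - 1) + 1"
    by (simp add: card_insert_if)
  moreover have "q * q ^ (h - 1) = (q - 1) * q ^ (h - 1) + q ^ (h - 1)"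
    using q_ge_2 by (cases q) simp_all
  ultimately have "card (insert 0 bad) < card (UNIV :: 'a set)"
    using card_UNIV power_q_h two_le_power_q_h_minus_1 by linarith
  then obtain \<alpha> where "\<alpha> \<notin> insert 0 bad"
    by (metis UNIV_eq_I less_irrefl)
  then show ?thesis
    by (auto simp: bad_def)
qed

text \<open>With \<open>k = tr x'\<close> and \<open>j = tr x\<close> in \<open>GF(q)\<close>, a coincidence forces
  \<open>x' = (k - c) (j - c) / \<beta>\<close>; applying the \<open>GF(q)\<close>-linear \<open>tr\<close> determines \<open>j\<close> from \<open>k\<close>,
  and \<open>x = \<alpha> / (k - c)\<close>, which the choice of \<open>\<alpha>\<close> excludes.\<close>

lemma cyc_affine_ne_affine:
  assumes c: "c \<notin> base_field" and \<beta>: "\<beta> \<noteq> 0"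
    and t1: "tr (1 / \<beta>) \<noteq> 0" and t2: "tr (c / \<beta>) = 0" and t3: "tr (c * c / \<beta>) \<noteq> 0"
    and avoid: "\<forall>k\<in>base_field - {0}.
      tr (\<alpha> / (k - c)) \<noteq> (k - tr (c * c / \<beta>)) / (k * tr (1 / \<beta>))"
  shows "cyc \<alpha> \<beta> (x', tr x' - c, 1) \<noteq> scale3 l (x, tr x - c, 1)"
proof
  assume "cyc \<alpha> \<beta> (x', tr x' - c, 1) = scale3 l (x, tr x - c, 1)"
  then have e1: "\<alpha> = l * x" and e2: "\<beta> * x' = l * (tr x - c)" and e3: "tr x' - c = l"
    by (simp_all add: cyc_def scale3_def)
  define k where "k = tr x'"
  define j where "j = tr x"
  have k: "k \<in> base_field" and j: "j \<in> base_field"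
    by (simp_all add: k_def j_def tr_in_base_field)
  have "\<beta> * x' = (k - c) * (j - c)"
    using e2 e3 by (simp add: k_def j_def)
  then have "x' = (k - c) * (j - c) / \<beta>"
    using \<beta> by (simp add: eq_divide_eq mult.commute)
  also have "\<dots> = (k * j) * (1 / \<beta>) - (k + j) * (c / \<beta>) + c * c / \<beta>"
    by (simp add: algebra_simps add_divide_distrib diff_divide_distrib)
  finally have "k = tr ((k * j) * (1 / \<beta>) - (k + j) * (c / \<beta>) + c * c / \<beta>)"
    by (simp add: k_def)
  also have "\<dots> = (k * j) * tr (1 / \<beta>) - (k + j) * tr (c / \<beta>) + tr (c * c / \<beta>)"
    by (simp only: tr_add tr_diff tr_base_field_mult base_field_mult base_field_add k j)
  finally have kj: "k = k * j * tr (1 / \<beta>) + tr (c * c / \<beta>)"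
    using t2 by simp
  then have "k \<noteq> 0"
    using t3 by auto
  moreover have "k - c \<noteq> 0"
    using k c by auto
  then have "x = \<alpha> / (k - c)"
    using e1 e3 by (simp add: k_def field_simps)
  moreover have "j = (k - tr (c * c / \<beta>)) / (k * tr (1 / \<beta>))"
    using kj \<open>k \<noteq> 0\<close> t1 by (simp add: field_simps)
  ultimately show False
    using avoid k by (simp add: j_def)
qed

lemma cyc_ideal_ne_affine:
  assumes "c \<noteq> 0" "\<beta> \<noteq> 0" "tr (c / \<beta>) = 0" "d \<in> directions (\<lambda>x. tr x - c)"
  shows "cyc \<alpha> \<beta> (1, d, 0) \<noteq> scale3 l (x, tr x - c, 1)"
proof
  assume "cyc \<alpha> \<beta> (1, d, 0) = scale3 l (x, tr x - c, 1)"
  then have "l * x = 0" "\<beta> = l * (tr x - c)" "d = l"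
    by (simp_all add: cyc_def scale3_def)
  then have "d \<noteq> 0" "\<beta> = - d * c"
    using assms(2) by (auto simp: tr_0)
  obtain z where z: "z \<noteq> 0" "d = tr z / z"
    using assms(4) by (auto simp: directions_tr_minus)
  then have "z = - tr z * (c / \<beta>)"
    using \<open>\<beta> = - d * c\<close> assms(1,2) by (simp add: field_simps)
  then have "tr z = - tr z * tr (c / \<beta>)"
    by (metis tr_base_field_mult tr_in_base_field tr_minus mult_minus_left)
  then show False
    using \<open>d \<noteq> 0\<close> z assms(3) by simp
qed

lemma redei_set_disjoint_image_cyc:
  assumes c: "c \<notin> base_field" and "\<beta> \<noteq> 0"
    and t1: "tr (1 / \<beta>) \<noteq> 0" and t2: "tr (c / \<beta>) = 0" and t3: "tr (c * c / \<beta>) \<noteq> 0"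
    and avoid: "\<forall>k\<in>base_field - {0}.
      tr (\<alpha> / (k - c)) \<noteq> (k - tr (c * c / \<beta>)) / (k * tr (1 / \<beta>))"
  shows "redei_set (\<lambda>x. tr x - c) \<inter> image (cyc \<alpha> \<beta>) ` redei_set (\<lambda>x. tr x - c) = {}"
proof -
  define D where "D = directions (\<lambda>x. tr x - c)"
  define V :: "'a vec3 set" where "V = range (\<lambda>x. (x, tr x - c, 1)) \<union> (\<lambda>d. (1, d, 0)) ` D"
  have R: "redei_set (\<lambda>x. tr x - c) = proj_point ` V"
    unfolding redei_set_def V_def D_def image_Un image_image ..
  have "c \<noteq> 0"
    using c zero_in_base_field by auto
  have no_match: "cyc \<alpha> \<beta> w \<noteq> scale3 l u" if u: "u \<in> V" and w: "w \<in> V" and "l \<noteq> 0" for u w l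
  proof -
    consider (affine) x where "u = (x, tr x - c, 1)" | (ideal) d where "d \<in> D" "u = (1, d, 0)"
      using u unfolding V_def by blast
    then show ?thesis
    proof cases
      case affine
      consider (affine') x' where "w = (x', tr x' - c, 1)" | (ideal') d' where "d' \<in> D" "w = (1, d', 0)"
        using w unfolding V_def by blast
      then show ?thesis
      proof cases
        case affine'
        then show ?thesis
          using cyc_affine_ne_affine[OF c assms(2) t1 t2 t3 avoid] affine by simp
      next
        case ideal'
        then show ?thesis
          using cyc_ideal_ne_affine[OF \<open>c \<noteq> 0\<close> assms(2) t2] affine by (simp add: D_def)
      qed
    next
      case ideal
      have "tr x' - c \<noteq> 0" for x'
        using c tr_in_base_field by auto
      then show ?thesis
        using w ideal \<open>l \<noteq> 0\<close> unfolding V_def by (auto simp: cyc_def scale3_def)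
    qed
  qed
  show ?thesis
  proof (rule ccontr)
    assume "redei_set (\<lambda>x. tr x - c) \<inter> image (cyc \<alpha> \<beta>) ` redei_set (\<lambda>x. tr x - c) \<noteq> {}"
    then obtain u w where "u \<in> V" "w \<in> V" "proj_point u = proj_point (cyc \<alpha> \<beta> w)"
      unfolding R by (auto simp: image_cyc_proj_point)
    then show False
      using no_match unfolding proj_point_eq_iff by blast
  qed
qed

lemma exists_redei_set_disjoint_image_cyc:
  "\<exists>c \<alpha> \<beta>. \<alpha> \<noteq> 0 \<and> \<beta> \<noteq> 0 \<and>
     redei_set (\<lambda>x. tr x - c) \<inter> image (cyc \<alpha> \<beta>) ` redei_set (\<lambda>x. tr x - c) = {}"
proof -
  obtain y where y: "y \<noteq> 0" "tr y = 0"
    using exists_nonzero_tr_eq_0 by blast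
  obtain z where z: "tr z \<noteq> 0" "tr (y * y / z) \<noteq> 0"
    using exists_tr_ne_0_and_tr_divide_ne_0[of "y * y"] y(1) by auto
  then have "z \<noteq> 0"
    using tr_0 by auto
  define c where "c = z / y"
  define \<beta> where "\<beta> = z / (y * y)"
  have "\<beta> \<noteq> 0"
    using \<open>z \<noteq> 0\<close> y(1) by (simp add: \<beta>_def)
  have params: "1 / \<beta> = y * y / z" "c / \<beta> = y" "c * c / \<beta> = z"
    using \<open>z \<noteq> 0\<close> y(1) by (simp_all add: c_def \<beta>_def field_simps)
  have "c \<notin> base_field"
  proof
    assume "c \<in> base_field"
    then have "tr (c * y) = c * tr y"
      by (rule tr_base_field_mult)
    then show False
      using y z by (simp add: c_def)
  qed
  then obtain \<alpha> where "\<alpha> \<noteq> 0" and avoid: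
    "\<forall>k\<in>base_field - {0}. tr (\<alpha> / (k - c)) \<noteq> (k - tr (c * c / \<beta>)) / (k * tr (1 / \<beta>))"
    using exists_nonzero_tr_divide_avoiding[of c "\<lambda>k. (k - tr (c * c / \<beta>)) / (k * tr (1 / \<beta>))"]
    by blast
  have "tr (1 / \<beta>) \<noteq> 0" "tr (c / \<beta>) = 0" "tr (c * c / \<beta>) \<noteq> 0"
    using params y z by simp_all
  then have "redei_set (\<lambda>x. tr x - c) \<inter> image (cyc \<alpha> \<beta>) ` redei_set (\<lambda>x. tr x - c) = {}"
    using redei_set_disjoint_image_cyc[OF \<open>c \<notin> base_field\<close> \<open>\<beta> \<noteq> 0\<close>] avoid
    by blast
  then show ?thesis
    using \<open>\<alpha> \<noteq> 0\<close> \<open>\<beta> \<noteq> 0\<close> by blast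
qed

lemma three_fold_size_le_card_pg_points:
  "3 * (q ^ h + q ^ (h - 1) + 1) \<le> card (pg_points :: 'a vec3 set set)"
proof -
  define Q r where "Q = q ^ h" and "r = q ^ (h - 1)"
  have "2 \<le> r" "2 * r \<le> Q"
    using two_le_power_q_h_minus_1 power_q_h q_ge_2 by (simp_all add: Q_def r_def)
  then have "3 * (Q + r + 1) \<le> 4 * Q + Q + 1"
    by arith
  also have "4 * Q \<le> Q * Q"
    using \<open>2 \<le> r\<close> \<open>2 * r \<le> Q\<close> by (intro mult_le_mono1) linarith
  finally have "3 * (Q + r + 1) \<le> Q ^ 2 + Q + 1"
    by (simp add: power2_eq_square)
  then show ?thesis
    using card_pg_points_ge[where 'a = 'a] card_UNIV by (simp add: Q_def r_def)
qed

theorem exists_three_fold_blocking_set: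
  "\<exists>B :: 'a vec3 set set. multiple_blocking_set 3 B \<and> card B = 3 * (q ^ h + q ^ (h - 1) + 1)"
proof -
  obtain c \<alpha> \<beta> where "\<alpha> \<noteq> 0" "\<beta> \<noteq> 0"
    and disjoint: "redei_set (\<lambda>x. tr x - c) \<inter> image (cyc \<alpha> \<beta>) ` redei_set (\<lambda>x. tr x - c) = {}"
    using exists_redei_set_disjoint_image_cyc by blast
  define R where "R = redei_set (\<lambda>x. tr x - c)"
  define B where "B = (\<Union>i<3. (image (image (cyc \<alpha> \<beta>)) ^^ i) R)"
  have blocking: "multiple_blocking_set 3 B"
    unfolding B_def R_def
    by (rule multiple_blocking_set_cyc_orbit)
      (simp_all add: blocking_set_redei_set \<open>\<alpha> \<noteq> 0\<close> \<open>\<beta> \<noteq> 0\<close> disjoint)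
  have "card B \<le> (\<Sum>i<3. card ((image (image (cyc \<alpha> \<beta>)) ^^ i) R))"
    unfolding B_def by (rule card_UN_le) simp
  also have "\<dots> \<le> (\<Sum>i<3::nat. card R)"
    by (intro sum_mono card_funpow_image_le)
  also have "\<dots> = 3 * card R"
    by simp
  also have "\<dots> \<le> 3 * (q ^ h + q ^ (h - 1) + 1)"
    using card_redei_set_le[of "\<lambda>x. tr x - c"] card_directions_tr_le[of c] card_UNIV
    by (simp add: R_def)
  finally show ?thesis
    using blocking multiple_blocking_set_of_card three_fold_size_le_card_pg_points by blast
qed

end

theorem corollary4p8:
  fixes q h :: nat
  assumes "\<exists>p k. prime p \<and> k > 0 \<and> q = p ^ k"
    and "h \<ge> 2"
    and "card (UNIV :: 'a set) = q ^ h"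
  shows "\<exists>B :: ('a::{finite,field}) vec3 set set. multiple_blocking_set 3 B \<and>
           card B = 3 * (q ^ h + q ^ (h - 1) + 1)"
proof -
  obtain p k where p: "prime p" and "k > 0" and q: "q = p ^ k"
    using assms(1) by blast
  have "CHAR('a) = p"
    using CHAR_eq_if_card_eq_prime_power[OF p, of "k * h", where 'a = 'a] assms(3)
    by (simp add: q power_mult)
  have "2 \<le> p"
    using p by (rule prime_ge_2_nat)
  moreover have "p \<le> q"
    using \<open>2 \<le> p\<close> \<open>k > 0\<close> by (simp add: q self_le_power)
  ultimately have "2 \<le> q"
    by linarith
  interpret relative_trace q h "\<lambda>x :: 'a. \<Sum>i<h. x ^ q ^ i"
  proof
    show "(x + y) ^ q = x ^ q + y ^ q" for x y :: 'a
      using p q \<open>CHAR('a) = p\<close> by (intro freshmans_dream') simp_all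
  qed (simp_all add: \<open>2 \<le> q\<close> assms(2,3))
  show ?thesis
    by (rule exists_three_fold_blocking_set)
qed

end
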